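(* Let $\sigma\in\{+1,-1\}$ and consider the ODE $$(a^2-1)Q''(a)+\Big(\tfrac83a-\tfrac2a\Big)Q'(a)+\tfrac49Q(a)+\sigma Q(a)^7=0.\qquad(\ast)$$ There exists $\varepsilon>0$ small such that for any $0\le q_0\le\varepsilon$, $(\ast)$ admits a unique smooth solution on $[0,\frac12]$ with $Q(0)=q_0$, $Q'(0)=0$. Moreover, $$Q(1/2)=q_0Q_0(1/2)+O(q_0^7),\qquad Q'(1/2)=q_0Q_0'(1/2)+O(q_0^7),$$ where $Q_0(a):=\frac34\big(\varphi_2(a)-\varphi_1(a)\big)$ with $\varphi_1(a)=a^{-1}(1-a)^{\frac23}$, $\varphi_2(a)=a^{-1}(1+a)^{\frac23}$, and the solution extends as a smooth even function to the interval $[-\frac12,\frac12]$.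
   Context: The function $Q_0$ is analytic and even near $a=0$ with $Q_0(0)=1$; $\varphi_1,\varphi_2$ form a fundamental system of the linear part of $(\ast)$. $O(q_0^7)$ denotes a quantity bounded by an absolute constant times $q_0^7$. *)

theory Defs
  imports "HOL-Analysis.Analysis"
begin

text \<open>C-infinity on a set S (one-sided derivatives at boundary points of S):
  D n is the n-th derivative of f relative to S.\<close>
definition smooth_derivs_on :: "real set \<Rightarrow> (real \<Rightarrow> real) \<Rightarrow> (nat \<Rightarrow> real \<Rightarrow> real) \<Rightarrow> bool" where
  "smooth_derivs_on S f D \<longleftrightarrow>
     D 0 = f \<and> (\<forall>n. \<forall>x\<in>S. (D n has_real_derivative D (Suc n) x) (at x within S))"

definition smooth_on :: "real set \<Rightarrow> (real \<Rightarrow> real) \<Rightarrow> bool" where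
  "smooth_on S f \<longleftrightarrow> (\<exists>D. smooth_derivs_on S f D)"

text \<open>Q is a smooth solution of the ODE on [0,1/2] with Q(0)=q0, Q'(0)=0.
  The ODE is imposed on (0,1/2] (it is singular at a = 0).\<close>
definition ode_sol :: "real \<Rightarrow> real \<Rightarrow> (real \<Rightarrow> real) \<Rightarrow> bool" where
  "ode_sol \<sigma> q0 Q \<longleftrightarrow>
     (\<exists>D. smooth_derivs_on {0..1/2} Q D \<and> Q 0 = q0 \<and> D 1 0 = 0 \<and>
        (\<forall>a\<in>{0<..1/2}. (a\<^sup>2 - 1) * D 2 a + (8/3 * a - 2 / a) * D 1 a
                          + 4/9 * Q a + \<sigma> * Q a ^ 7 = 0))"

definition phi1 :: "real \<Rightarrow> real" where
  "phi1 a = (1 - a) powr (2/3) / a"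

definition phi2 :: "real \<Rightarrow> real" where
  "phi2 a = (1 + a) powr (2/3) / a"

definition Q0 :: "real \<Rightarrow> real" where
  "Q0 a = 3/4 * (phi2 a - phi1 a)"

end

theory Submission
  imports Defs
begin

text \<open>Frobenius method.  Inserting \<open>Q = \<Sum> c\<^sub>n a\<^sup>n\<close> into the ODE forces \<open>c\<^sub>1 = 0\<close> and
  \<open>(n+2)(n+3) c\<^sub>n\<^sub>+\<^sub>2 = (n+1/3)(n+4/3) c\<^sub>n + \<sigma> (c\<^sup>7)\<^sub>n\<close>; without the nonlinear term this recursion
  produces \<open>q0 e\<^sub>n\<close>, with \<open>e\<^sub>n\<close> the Taylor coefficients of \<open>Q0\<close> (binomial series of \<open>(1 \<plusminus> a)\<^sup>2\<^sup>/\<^sup>3\<close>).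
  With weights \<open>(2/3)\<^sup>n\<close> the recursion gives \<open>\<Sum> \<bar>c\<^sub>n\<bar> (2/3)\<^sup>n \<le> 2 q0\<close>, and the remainder
  \<open>c\<^sub>n - q0 e\<^sub>n\<close>, driven by the nonlinear term alone, has \<open>\<Sum> (n+1) \<bar>c\<^sub>n - q0 e\<^sub>n\<bar> (2/3)\<^sup>n = O(q0\<^sup>7)\<close>;
  evaluating at \<open>a = 1/2\<close> gives both estimates.  Odd coefficients vanish, so the series is even
  and analytic on \<open>\<bar>a\<bar> < 2/3\<close>.  For uniqueness, the difference \<open>W\<close> of two solutions satisfies
  \<open>(a\<^sup>2/(1-a\<^sup>2) W')' = a\<^sup>2/(1-a\<^sup>2)\<^sup>2 (8/3 a W' + F)\<close> with \<open>\<bar>F\<bar> \<le> L \<bar>W\<bar>\<close>: the weight removes the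
  singularity at \<open>0\<close>, and a contraction on intervals of fixed length propagates \<open>W = 0\<close> from \<open>a = 0\<close>.\<close>

section \<open>Convolution powers\<close>

fun conv_pow :: "(nat \<Rightarrow> 'a::comm_semiring_1) \<Rightarrow> nat \<Rightarrow> nat \<Rightarrow> 'a" where
  "conv_pow c 0 n = (if n = 0 then 1 else 0)"
| "conv_pow c (Suc j) n = (\<Sum>i\<le>n. c i * conv_pow c j (n - i))"

lemma conv_pow_cong:
  assumes "\<And>i. i \<le> n \<Longrightarrow> c i = c' i"
  shows "conv_pow c j n = conv_pow c' j n"
  using assms
proof (induction j arbitrary: n)
  case (Suc j)
  show ?case by (simp, rule sum.cong) (use Suc in auto)
qed simp

lemma conv_pow_odd:
  assumes "\<And>i. i \<le> n \<Longrightarrow> odd i \<Longrightarrow> c i = 0" and "odd n"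
  shows "conv_pow c j n = 0"
  using assms
proof (induction j arbitrary: n)
  case 0
  then show ?case by (auto elim: oddE)
next
  case (Suc j)
  have "c i * conv_pow c j (n - i) = 0" if "i \<le> n" for i
    using Suc.IH[of "n - i"] Suc.prems that by (cases "odd i") auto
  then show ?case by simp
qed

lemma conv_pow_majorant:
  fixes c :: "nat \<Rightarrow> 'a::real_normed_field"
  assumes "r \<ge> 0"
  shows "(\<Sum>n\<le>M. norm (conv_pow c j n) * r^n) \<le> (\<Sum>n\<le>M. norm (c n) * r^n)^j"
proof (induction j)
  case 0
  have "(\<Sum>n\<le>M. norm (conv_pow c 0 n) * r^n) = (\<Sum>n\<le>M. if n = 0 then 1 else 0)"
    by (rule sum.cong) auto
  then show ?case by simp
next
  case (Suc j)
  define A where "A n = norm (c n) * r^n" for n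
  define B where "B n = norm (conv_pow c j n) * r^n" for n
  have A0: "A n \<ge> 0" and B0: "B n \<ge> 0" for n
    using assms by (simp_all add: A_def B_def)
  have "norm (conv_pow c (Suc j) n) * r^n \<le> (\<Sum>i\<le>n. A i * B (n - i))" for n
  proof -
    have "norm (conv_pow c (Suc j) n) * r^n \<le> (\<Sum>i\<le>n. norm (c i * conv_pow c j (n - i))) * r^n"
      using assms by (auto intro!: mult_right_mono norm_sum)
    also have "\<dots> = (\<Sum>i\<le>n. A i * B (n - i))"
      unfolding sum_distrib_right A_def B_def
    proof (rule sum.cong)
      fix i assume "i \<in> {..n}"
      then have "r^n = r^i * r^(n - i)" by (simp flip: power_add)
      then show "norm (c i * conv_pow c j (n - i)) * r^n = norm (c i) * r^i * (norm (conv_pow c j (n - i)) * r^(n - i))"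
        by (simp add: norm_mult mult_ac)
    qed simp
    finally show ?thesis .
  qed
  then have "(\<Sum>n\<le>M. norm (conv_pow c (Suc j) n) * r^n) \<le> (\<Sum>n\<le>M. \<Sum>i\<le>n. A i * B (n - i))"
    by (rule sum_mono)
  also have "\<dots> = (\<Sum>(i,k)\<in>{(i,k). i + k \<le> M}. A i * B k)"
    by (rule sum.triangle_reindex_eq[symmetric])
  also have "\<dots> \<le> (\<Sum>(i,k)\<in>{..M} \<times> {..M}. A i * B k)"
    by (rule sum_mono2) (auto intro: mult_nonneg_nonneg A0 B0)
  also have "\<dots> = (\<Sum>i\<le>M. A i) * (\<Sum>k\<le>M. B k)"
    by (simp add: sum_product sum.cartesian_product)
  also have "\<dots> \<le> (\<Sum>i\<le>M. A i) * (\<Sum>i\<le>M. A i)^j"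
    using Suc.IH A0 by (intro mult_left_mono sum_nonneg) (simp_all add: A_def B_def)
  finally show ?case by (simp add: A_def)
qed

lemma summable_norm_conv_pow_powser:
  fixes c :: "nat \<Rightarrow> 'a::real_normed_field"
  assumes "summable (\<lambda>n. norm (c n * x^n))"
  shows "summable (\<lambda>n. norm (conv_pow c j n * x^n))"
proof (rule summableI_nonneg_bounded)
  fix N
  have "(\<Sum>n<N. norm (conv_pow c j n * x^n)) \<le> (\<Sum>n\<le>N. norm (conv_pow c j n) * norm x^n)"
    by (auto simp: norm_mult norm_power intro!: sum_mono2)
  also have "\<dots> \<le> (\<Sum>n\<le>N. norm (c n) * norm x^n)^j"
    by (rule conv_pow_majorant) simp
  also have "\<dots> \<le> (\<Sum>n. norm (c n * x^n))^j"
    using assms by (auto intro!: power_mono sum_le_suminf sum_nonneg simp: norm_mult norm_power)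
  finally show "(\<Sum>n<N. norm (conv_pow c j n * x^n)) \<le> (\<Sum>n. norm (c n * x^n))^j" .
qed simp

lemma conv_pow_powser_sums:
  fixes c :: "nat \<Rightarrow> 'a::{real_normed_field,banach}"
  assumes "summable (\<lambda>n. norm (c n * x^n))"
  shows "(\<lambda>n. conv_pow c j n * x^n) sums (\<Sum>n. c n * x^n)^j"
proof (induction j)
  case 0
  have "(\<lambda>n. conv_pow c 0 n * x^n) = (\<lambda>n. if n = 0 then 1 else 0)"
    by auto
  then show ?case using sums_single[of 0 "\<lambda>_. 1::'a"] by simp
next
  case (Suc j)
  have "(\<lambda>k. \<Sum>i\<le>k. (c i * x^i) * (conv_pow c j (k - i) * x^(k - i))) sums
         ((\<Sum>k. c k * x^k) * (\<Sum>k. conv_pow c j k * x^k))"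
    by (rule Cauchy_product_sums[OF assms summable_norm_conv_pow_powser[OF assms]])
  moreover have "(\<Sum>i\<le>k. (c i * x^i) * (conv_pow c j (k - i) * x^(k - i))) = conv_pow c (Suc j) k * x^k" for k
    unfolding conv_pow.simps sum_distrib_right
  proof (rule sum.cong)
    fix i assume "i \<in> {..k}"
    then have "x^k = x^i * x^(k - i)" by (simp flip: power_add)
    then show "(c i * x^i) * (conv_pow c j (k - i) * x^(k - i)) = c i * conv_pow c j (k - i) * x^k"
      by (simp add: mult_ac)
  qed simp
  ultimately show ?case
    using Suc.IH by (simp add: sums_unique [symmetric])
qed


section \<open>Taylor coefficients\<close>

definition lin_ratio :: "nat \<Rightarrow> real" where
  "lin_ratio n = (real n + 1/3) * (real n + 4/3) / ((real n + 2) * (real n + 3))"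

lemma lin_ratio_nonneg: "lin_ratio n \<ge> 0"
  by (simp add: lin_ratio_def)

lemma lin_ratio_weighted_le: "(real n + 3) * lin_ratio n \<le> real n + 1"
proof -
  have "(real n + 3) * lin_ratio n = (real n + 1/3) * (real n + 4/3) / (real n + 2)"
    by (simp add: lin_ratio_def)
  also have "\<dots> \<le> real n + 1"
  proof -
    have "(real n + 1/3) * (real n + 4/3) = real n * real n + 5/3 * real n + 4/9"
      by (auto simp: field_simps)
    also have "\<dots> \<le> (real n + 1) * (real n + 2)"
      by (simp add: algebra_simps)
    finally show ?thesis by (simp add: divide_le_eq)
  qed
  finally show ?thesis .
qed

lemma lin_ratio_le_1: "lin_ratio n \<le> 1"
proof -
  have "(real n + 3) * lin_ratio n \<le> (real n + 3) * 1"
    by (rule order_trans[OF lin_ratio_weighted_le]) simp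
  then show ?thesis by (simp only: mult_le_cancel_left_pos[of "real n + 3"])
qed

text \<open>The truncation to indices \<open>i \<le> n\<close> only makes the recursion visibly well-founded;
  \<open>sol_coeff_Suc_Suc\<close> removes it.\<close>

fun sol_coeff :: "real \<Rightarrow> real \<Rightarrow> nat \<Rightarrow> real" where
  "sol_coeff s q 0 = q"
| "sol_coeff s q (Suc 0) = 0"
| "sol_coeff s q (Suc (Suc n)) =
     lin_ratio n * sol_coeff s q n
     + s * conv_pow (\<lambda>i. if i \<le> n then sol_coeff s q i else 0) 7 n / ((real n + 2) * (real n + 3))"

declare sol_coeff.simps(3) [simp del]

lemma sol_coeff_Suc_Suc:
  "sol_coeff s q (Suc (Suc n)) =
     lin_ratio n * sol_coeff s q n + s * conv_pow (sol_coeff s q) 7 n / ((real n + 2) * (real n + 3))"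
  unfolding sol_coeff.simps(3) by (subst conv_pow_cong[of n _ "sol_coeff s q"]) auto

lemma sol_coeff_rec:
  "(real n + 2) * (real n + 3) * sol_coeff s q (Suc (Suc n)) =
     (real n + 1/3) * (real n + 4/3) * sol_coeff s q n + s * conv_pow (sol_coeff s q) 7 n"
proof -
  have D: "(real n + 2) * (real n + 3) \<noteq> 0" by simp
  then have "(real n + 2) * (real n + 3) * lin_ratio n = (real n + 1/3) * (real n + 4/3)"
    by (simp add: lin_ratio_def)
  then show ?thesis
    using D unfolding sol_coeff_Suc_Suc distrib_left by (simp add: mult.assoc [symmetric])
qed

lemma sol_coeff_odd: "odd n \<Longrightarrow> sol_coeff s q n = 0"
proof (induction n rule: less_induct)
  case (less n)
  show ?case
  proof (cases "n < 2")
    case True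
    with less.prems have "n = Suc 0" by presburger
    then show ?thesis by simp
  next
    case False
    then obtain m where n: "n = Suc (Suc m)"
      by (metis add_2_eq_Suc le_add_diff_inverse not_less)
    with less have "odd m" and "\<And>i. i \<le> m \<Longrightarrow> odd i \<Longrightarrow> sol_coeff s q i = 0"
      by auto
    then show ?thesis
      using conv_pow_odd[of m "sol_coeff s q" 7] by (simp add: n sol_coeff_Suc_Suc)
  qed
qed

lemma forced_rec_abs_le:
  assumes rec: "(real n + 2) * (real n + 3) * u (Suc (Suc n)) = (real n + 1/3) * (real n + 4/3) * u n + p"
  shows "(real n + 3) * \<bar>u (Suc (Suc n))\<bar> \<le> (real n + 1) * \<bar>u n\<bar> + \<bar>p\<bar> / 2"
    and "\<bar>u (Suc (Suc n))\<bar> \<le> \<bar>u n\<bar> + \<bar>p\<bar> / 6"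
proof -
  have D: "(real n + 2) * (real n + 3) > 0" by simp
  have "u (Suc (Suc n)) = ((real n + 1/3) * (real n + 4/3) * u n + p) / ((real n + 2) * (real n + 3))"
    using rec D by (simp add: eq_divide_eq mult.commute)
  also have "\<dots> = lin_ratio n * u n + p / ((real n + 2) * (real n + 3))"
    by (simp add: lin_ratio_def add_divide_distrib)
  finally have "u (Suc (Suc n)) = lin_ratio n * u n + p / ((real n + 2) * (real n + 3))" .
  then have u: "\<bar>u (Suc (Suc n))\<bar> \<le> lin_ratio n * \<bar>u n\<bar> + \<bar>p\<bar> / ((real n + 2) * (real n + 3))"
    using lin_ratio_nonneg[of n] by (simp add: abs_mult abs_triangle_ineq [THEN order_trans])
  have "(real n + 3) * (\<bar>p\<bar> / ((real n + 2) * (real n + 3))) = \<bar>p\<bar> / (real n + 2)"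
    by simp
  then have "(real n + 3) * \<bar>u (Suc (Suc n))\<bar> \<le> (real n + 3) * lin_ratio n * \<bar>u n\<bar> + \<bar>p\<bar> / (real n + 2)"
    using mult_left_mono[OF u, of "real n + 3"] by (simp only: distrib_left mult.assoc)
  also have "\<dots> \<le> (real n + 1) * \<bar>u n\<bar> + \<bar>p\<bar> / 2"
    using lin_ratio_weighted_le[of n] by (intro add_mono mult_right_mono frac_le) auto
  finally show "(real n + 3) * \<bar>u (Suc (Suc n))\<bar> \<le> (real n + 1) * \<bar>u n\<bar> + \<bar>p\<bar> / 2" .
  have "\<bar>p\<bar> / ((real n + 2) * (real n + 3)) \<le> \<bar>p\<bar> / 6"
    by (intro frac_le) (auto simp: algebra_simps)
  then show "\<bar>u (Suc (Suc n))\<bar> \<le> \<bar>u n\<bar> + \<bar>p\<bar> / 6"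
    using u mult_right_mono[OF lin_ratio_le_1[of n], of "\<bar>u n\<bar>"] by linarith
qed

lemma sum_atMost_Suc_Suc_shift:
  fixes f :: "nat \<Rightarrow> 'a::comm_monoid_add"
  shows "(\<Sum>n\<le>Suc (Suc N). f n) = f 0 + f 1 + (\<Sum>n\<le>N. f (Suc (Suc n)))"
  by (simp only: sum.atMost_Suc_shift add.assoc One_nat_def)

lemma sum_two_step_le:
  fixes a b :: "nat \<Rightarrow> real"
  assumes "\<And>n. a (Suc (Suc n)) \<le> \<alpha> * a n + b n"
  shows "(\<Sum>n\<le>Suc (Suc N). a n) \<le> a 0 + a 1 + \<alpha> * (\<Sum>n\<le>N. a n) + (\<Sum>n\<le>N. b n)"
proof -
  have "(\<Sum>n\<le>N. a (Suc (Suc n))) \<le> (\<Sum>n\<le>N. \<alpha> * a n + b n)"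
    by (intro sum_mono assms)
  then show ?thesis
    unfolding sum_atMost_Suc_Suc_shift by (simp add: sum.distrib sum_distrib_left)
qed

lemma sol_coeff_majorant:
  assumes s: "\<bar>s\<bar> \<le> 1" and q: "0 \<le> q" "q \<le> 1/4"
  shows "(\<Sum>n\<le>N. \<bar>sol_coeff s q n\<bar> * (2/3)^n) \<le> 2 * q"
proof (induction N rule: less_induct)
  case (less N)
  define a where "a n = \<bar>sol_coeff s q n\<bar> * (2/3::real)^n" for n
  define P where "P n = \<bar>conv_pow (sol_coeff s q) 7 n\<bar>" for n
  show ?case
  proof (cases "N < 2")
    case True
    then have "N = 0 \<or> N = 1" by auto
    then show ?thesis using q by auto
  next
    case False
    then obtain M where N: "N = Suc (Suc M)"
      by (metis add_2_eq_Suc le_add_diff_inverse not_less)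
    have IH: "(\<Sum>n\<le>M. a n) \<le> 2 * q"
      using less.IH N by (simp add: a_def)
    have step: "a (Suc (Suc n)) \<le> 4/9 * a n + 2/27 * (P n * (2/3)^n)" for n
    proof -
      have "\<bar>s * conv_pow (sol_coeff s q) 7 n\<bar> \<le> P n"
        unfolding P_def abs_mult using s by (simp add: mult_left_le_one_le)
      then have "\<bar>sol_coeff s q (Suc (Suc n))\<bar> \<le> \<bar>sol_coeff s q n\<bar> + P n / 6"
        using forced_rec_abs_le(2)[of n "sol_coeff s q", OF sol_coeff_rec] by linarith
      then have "a (Suc (Suc n)) \<le> (\<bar>sol_coeff s q n\<bar> + P n / 6) * (2/3)^(Suc (Suc n))"
        unfolding a_def by (rule mult_right_mono) simp
      also have "\<dots> = 4/9 * a n + 2/27 * (P n * (2/3)^n)"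
        by (simp add: a_def algebra_simps)
      finally show ?thesis .
    qed
    have "(\<Sum>n\<le>M. P n * (2/3)^n) \<le> (\<Sum>n\<le>M. a n)^7"
      using conv_pow_majorant[where r="2/3" and M=M and c="sol_coeff s q" and j=7] by (simp add: P_def a_def)
    also have "\<dots> \<le> (2 * q)^7"
      using IH by (intro power_mono) (auto simp: a_def intro: sum_nonneg)
    finally have conv: "(\<Sum>n\<le>M. P n * (2/3)^n) \<le> (2 * q)^7" .
    have "q^6 \<le> (1/4)^6" using q by (intro power_mono) auto
    then have small: "256/27 * q^7 \<le> q / 9"
      using q mult_left_mono[of "q^6" "(1/4)^6" q] by (simp add: power_divide power_Suc [symmetric] del: power_Suc)
    have "(\<Sum>n\<le>N. a n) \<le> a 0 + a 1 + 4/9 * (\<Sum>n\<le>M. a n) + (\<Sum>n\<le>M. 2/27 * (P n * (2/3)^n))"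
      unfolding N by (rule sum_two_step_le[where b="\<lambda>n. 2/27 * (P n * (2/3)^n)", OF step])
    also have "\<dots> = q + 4/9 * (\<Sum>n\<le>M. a n) + 2/27 * (\<Sum>n\<le>M. P n * (2/3)^n)"
      using q by (simp add: a_def sum_distrib_left)
    also have "\<dots> \<le> q + 4/9 * (2 * q) + 2/27 * (2 * q)^7"
      using IH conv by linarith
    also have "\<dots> \<le> 2 * q" using small by simp
    finally show ?thesis by (simp add: a_def)
  qed
qed

lemma conv_pow_sol_coeff_majorant:
  assumes "\<bar>s\<bar> \<le> 1" "0 \<le> q" "q \<le> 1/4"
  shows "(\<Sum>n\<le>N. \<bar>conv_pow (sol_coeff s q) 7 n\<bar> * (2/3)^n) \<le> (2 * q)^7"
proof -
  have "(\<Sum>n\<le>N. \<bar>conv_pow (sol_coeff s q) 7 n\<bar> * (2/3)^n) \<le> (\<Sum>n\<le>N. \<bar>sol_coeff s q n\<bar> * (2/3)^n)^7"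
    using conv_pow_majorant[where r="2/3" and M=N and c="sol_coeff s q" and j=7] by simp
  also have "\<dots> \<le> (2 * q)^7"
    using sol_coeff_majorant[OF assms] by (intro power_mono sum_nonneg) auto
  finally show ?thesis .
qed

text \<open>Taylor coefficients of \<open>Q0\<close> at \<open>0\<close>, from the binomial series of \<open>(1 \<plusminus> a) powr (2/3)\<close>.\<close>

definition Q0_coeff :: "nat \<Rightarrow> real" where
  "Q0_coeff n = 3/4 * ((2/3) gchoose (n + 1)) * (1 + (-1)^n)"

lemma Q0_coeff_0: "Q0_coeff 0 = 1"
  by (simp add: Q0_coeff_def)

lemma Q0_coeff_1: "Q0_coeff (Suc 0) = 0"
  by (simp add: Q0_coeff_def)

lemma Q0_coeff_rec:
  "(real n + 2) * (real n + 3) * Q0_coeff (Suc (Suc n)) = (real n + 1/3) * (real n + 4/3) * Q0_coeff n"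
proof -
  define g where "g k = (2/3::real) gchoose k" for k
  have g: "real (Suc k) * g (Suc k) = (2/3 - real k) * g k" for k
    using gbinomial_mult_1[of "2/3::real" k] by (simp add: g_def algebra_simps)
  have "(real n + 2) * (real n + 3) * g (n + 3) = (real n + 2) * ((2/3 - real (n + 2)) * g (n + 2))"
    using g[of "n + 2"] by (simp add: numeral_3_eq_3 add_ac)
  also have "\<dots> = (2/3 - real (n + 2)) * (real (Suc (n + 1)) * g (Suc (n + 1)))"
    by (simp add: algebra_simps)
  also have "\<dots> = (real n + 1/3) * (real n + 4/3) * g (n + 1)"
    unfolding g by (simp add: field_simps)
  finally have h: "(real n + 2) * (real n + 3) * g (n + 3) = (real n + 1/3) * (real n + 4/3) * g (n + 1)" .
  have "(real n + 2) * (real n + 3) * Q0_coeff (Suc (Suc n))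
      = 3/4 * (1 + (-1)^n) * ((real n + 2) * (real n + 3) * g (n + 3))"
    by (simp add: Q0_coeff_def g_def numeral_3_eq_3 mult_ac)
  also have "\<dots> = (real n + 1/3) * (real n + 4/3) * Q0_coeff n"
    unfolding h by (simp add: Q0_coeff_def g_def mult_ac)
  finally show ?thesis .
qed

definition rem_coeff :: "real \<Rightarrow> real \<Rightarrow> nat \<Rightarrow> real" where
  "rem_coeff s q n = sol_coeff s q n - q * Q0_coeff n"

lemma rem_coeff_rec:
  "(real n + 2) * (real n + 3) * rem_coeff s q (Suc (Suc n)) =
     (real n + 1/3) * (real n + 4/3) * rem_coeff s q n + s * conv_pow (sol_coeff s q) 7 n"
  using sol_coeff_rec[of n s q] Q0_coeff_rec[of n] unfolding rem_coeff_def by algebra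

lemma rem_coeff_majorant:
  assumes s: "\<bar>s\<bar> \<le> 1" and q: "0 \<le> q" "q \<le> 1/4"
  shows "(\<Sum>n\<le>N. (real n + 1) * \<bar>rem_coeff s q n\<bar> * (2/3)^n) \<le> 2/5 * (2 * q)^7"
proof (cases "N < 2")
  case True
  then have "N = 0 \<or> N = 1" by auto
  then show ?thesis
    using q by (auto simp: rem_coeff_def Q0_coeff_0 Q0_coeff_1)
next
  case False
  then obtain M where N: "N = Suc (Suc M)"
    by (metis add_2_eq_Suc le_add_diff_inverse not_less)
  define a where "a n = (real n + 1) * \<bar>rem_coeff s q n\<bar> * (2/3::real)^n" for n
  define P where "P n = \<bar>conv_pow (sol_coeff s q) 7 n\<bar>" for n
  have step: "a (Suc (Suc n)) \<le> 4/9 * a n + 2/9 * (P n * (2/3)^n)" for n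
  proof -
    have "\<bar>s * conv_pow (sol_coeff s q) 7 n\<bar> \<le> P n"
      unfolding P_def abs_mult using s by (simp add: mult_left_le_one_le)
    then have "(real n + 3) * \<bar>rem_coeff s q (Suc (Suc n))\<bar> \<le> (real n + 1) * \<bar>rem_coeff s q n\<bar> + P n / 2"
      using forced_rec_abs_le(1)[of n "rem_coeff s q", OF rem_coeff_rec] by linarith
    then have "a (Suc (Suc n)) \<le> ((real n + 1) * \<bar>rem_coeff s q n\<bar> + P n / 2) * (2/3)^(Suc (Suc n))"
      unfolding a_def by (intro mult_right_mono) (simp_all add: add.commute)
    also have "\<dots> = 4/9 * a n + 2/9 * (P n * (2/3)^n)"
      by (simp add: a_def algebra_simps)
    finally show ?thesis .
  qed
  have "(\<Sum>n\<le>N. a n) \<le> a 0 + a 1 + 4/9 * (\<Sum>n\<le>M. a n) + (\<Sum>n\<le>M. 2/9 * (P n * (2/3)^n))"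
    unfolding N by (rule sum_two_step_le[where b="\<lambda>n. 2/9 * (P n * (2/3)^n)", OF step])
  also have "\<dots> = 4/9 * (\<Sum>n\<le>M. a n) + 2/9 * (\<Sum>n\<le>M. P n * (2/3)^n)"
    by (simp add: a_def rem_coeff_def Q0_coeff_0 Q0_coeff_1 sum_distrib_left)
  also have "\<dots> \<le> 4/9 * (\<Sum>n\<le>N. a n) + 2/9 * (2 * q)^7"
    using conv_pow_sol_coeff_majorant[OF s q, of M]
    by (intro add_mono mult_left_mono sum_mono2) (auto simp: N a_def P_def)
  finally show ?thesis by (simp add: a_def)
qed

section \<open>Power series solutions\<close>

definition powser_deriv :: "(nat \<Rightarrow> real) \<Rightarrow> nat \<Rightarrow> real \<Rightarrow> real" where
  "powser_deriv c m x = (\<Sum>n. (diffs ^^ m) c n * x^n)"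

lemma summable_diffs_iter:
  fixes c :: "nat \<Rightarrow> real"
  assumes "\<And>x. \<bar>x\<bar> < r \<Longrightarrow> summable (\<lambda>n. c n * x^n)" and "\<bar>x\<bar> < r"
  shows "summable (\<lambda>n. (diffs ^^ m) c n * x^n)"
  using assms(2)
proof (induction m arbitrary: x)
  case (Suc m)
  then show ?case
    using termdiff_converges[of x r "(diffs ^^ m) c"] by simp
qed (use assms(1) in simp)

lemma powser_deriv_has_derivative:
  assumes "\<And>x. \<bar>x\<bar> < r \<Longrightarrow> summable (\<lambda>n. c n * x^n)" and "\<bar>x\<bar> < r"
  shows "(powser_deriv c m has_real_derivative powser_deriv c (Suc m) x) (at x)"
  using termdiffs_strong'[of r "(diffs ^^ m) c" x] summable_diffs_iter[OF assms(1)] assms(2)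
  by (simp add: powser_deriv_def [abs_def])

lemma smooth_derivs_on_powser:
  assumes "\<And>x. \<bar>x\<bar> < r \<Longrightarrow> summable (\<lambda>n. c n * x^n)" and "\<And>x. x \<in> S \<Longrightarrow> \<bar>x\<bar> < r"
  shows "smooth_derivs_on S (powser_deriv c 0) (powser_deriv c)"
  unfolding smooth_derivs_on_def
  using powser_deriv_has_derivative[OF assms(1) assms(2)] by (blast intro: has_field_derivative_at_within)

lemma powser_deriv_0_even:
  assumes "\<And>n. odd n \<Longrightarrow> c n = 0"
  shows "powser_deriv c 0 (-x) = powser_deriv c 0 x"
  unfolding powser_deriv_def funpow_0
proof (intro arg_cong[where f=suminf] ext)
  fix n
  show "c n * (-x)^n = c n * x^n"
    by (cases "even n") (simp_all add: assms)
qed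

fun powser_shift :: "(nat \<Rightarrow> 'a::zero) \<Rightarrow> nat \<Rightarrow> 'a" where
  "powser_shift c 0 = 0"
| "powser_shift c (Suc n) = c n"

lemma sums_powser_shift:
  fixes c :: "nat \<Rightarrow> 'a::real_normed_field"
  assumes "(\<lambda>n. c n * x^n) sums S"
  shows "(\<lambda>n. powser_shift c n * x^n) sums (x * S)"
proof -
  have "(\<lambda>n. powser_shift c (Suc n) * x^(Suc n)) sums (x * S)"
    using sums_mult[OF assms, of x] by (simp add: mult_ac)
  then show ?thesis by (subst (asm) sums_Suc_iff) simp
qed

text \<open>The coefficient form of \<open>a\<close> times the ODE.\<close>

lemma ode_coeff_identity:
  fixes c :: "nat \<Rightarrow> real"
  assumes c1: "c 1 = 0"
    and rec: "\<And>n. (real n + 2) * (real n + 3) * c (Suc (Suc n))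
                    = (real n + 1/3) * (real n + 4/3) * c n + s * conv_pow c 7 n"
  shows "powser_shift (powser_shift (powser_shift (diffs (diffs c)))) n - powser_shift (diffs (diffs c)) n
         + 8/3 * powser_shift (powser_shift (diffs c)) n + 4/9 * powser_shift c n
         + s * powser_shift (conv_pow c 7) n = 2 * diffs c n"
proof -
  consider "n = 0" | "n = 1" | "n = 2" | m where "n = Suc (Suc (Suc m))"
    by (metis One_nat_def Suc_1 not0_implies_Suc)
  then show ?thesis
  proof cases
    case 1
    then show ?thesis using c1 by (simp add: diffs_def)
  next
    case 2
    then show ?thesis using rec[of 0] by (simp add: diffs_def)
  next
    case 3
    then show ?thesis using rec[of 1] c1 by (simp add: diffs_def numeral_2_eq_2)
  next
    case 4
    then show ?thesis
      using rec[of "Suc (Suc m)"] by (simp add: diffs_def algebra_simps)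
  qed
qed

lemma powser_solves_ode:
  fixes c :: "nat \<Rightarrow> real"
  assumes summ: "\<And>x. \<bar>x\<bar> < r \<Longrightarrow> summable (\<lambda>n. \<bar>c n * x^n\<bar>)"
    and c1: "c 1 = 0"
    and rec: "\<And>n. (real n + 2) * (real n + 3) * c (Suc (Suc n))
                    = (real n + 1/3) * (real n + 4/3) * c n + s * conv_pow c 7 n"
    and a: "a \<noteq> 0" "\<bar>a\<bar> < r"
  shows "(a\<^sup>2 - 1) * powser_deriv c 2 a + (8/3 * a - 2 / a) * powser_deriv c 1 a
           + 4/9 * powser_deriv c 0 a + s * powser_deriv c 0 a ^ 7 = 0"
proof -
  have conv: "summable (\<lambda>n. c n * x^n)" if "\<bar>x\<bar> < r" for x
    using summ[OF that] by (rule summable_rabs_cancel)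
  define D0 where "D0 = powser_deriv c 0 a"
  define D1 where "D1 = powser_deriv c 1 a"
  define D2 where "D2 = powser_deriv c 2 a"
  have S0: "(\<lambda>n. c n * a^n) sums D0"
    using conv[OF a(2)] by (simp add: D0_def powser_deriv_def summable_sums)
  have S1: "(\<lambda>n. diffs c n * a^n) sums D1"
    using summable_diffs_iter[OF conv a(2), of 1] by (simp add: D1_def powser_deriv_def summable_sums)
  have S2: "(\<lambda>n. diffs (diffs c) n * a^n) sums D2"
    using summable_diffs_iter[OF conv a(2), of 2]
    by (simp add: D2_def powser_deriv_def summable_sums numeral_2_eq_2)
  have S7: "(\<lambda>n. conv_pow c 7 n * a^n) sums D0^7"
    using conv_pow_powser_sums[of c a 7] summ[OF a(2)] by (simp add: D0_def powser_deriv_def)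
  define lhs where "lhs n = powser_shift (powser_shift (powser_shift (diffs (diffs c)))) n * a^n
    - powser_shift (diffs (diffs c)) n * a^n + 8/3 * (powser_shift (powser_shift (diffs c)) n * a^n)
    + 4/9 * (powser_shift c n * a^n) + s * (powser_shift (conv_pow c 7) n * a^n)" for n
  have "lhs sums (a * (a * (a * D2)) - a * D2 + 8/3 * (a * (a * D1)) + 4/9 * (a * D0) + s * (a * D0^7))"
    unfolding lhs_def by (intro sums_add sums_diff sums_mult sums_powser_shift S0 S1 S2 S7)
  moreover have "lhs = (\<lambda>n. 2 * (diffs c n * a^n))"
  proof
    fix n
    have "lhs n = (powser_shift (powser_shift (powser_shift (diffs (diffs c)))) n - powser_shift (diffs (diffs c)) n
         + 8/3 * powser_shift (powser_shift (diffs c)) n + 4/9 * powser_shift c n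
         + s * powser_shift (conv_pow c 7) n) * a^n"
      by (simp add: lhs_def algebra_simps)
    then show "lhs n = 2 * (diffs c n * a^n)"
      by (simp only: ode_coeff_identity[OF c1 rec])
  qed
  ultimately have "a * (a * (a * D2)) - a * D2 + 8/3 * (a * (a * D1)) + 4/9 * (a * D0) + s * (a * D0^7) = 2 * D1"
    using sums_mult[OF S1, of 2] by (simp add: sums_unique2)
  then have "a * ((a\<^sup>2 - 1) * D2 + (8/3 * a - 2 / a) * D1 + 4/9 * D0 + s * D0 ^ 7) = 0"
    using a(1) by (simp add: field_simps power2_eq_square)
  then show ?thesis
    using a(1) by (simp add: D0_def D1_def D2_def)
qed

lemma summable_abs_sol_coeff_powser:
  assumes s: "\<bar>s\<bar> \<le> 1" and q: "0 \<le> q" "q \<le> 1/4" and x: "\<bar>x\<bar> \<le> 2/3"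
  shows "summable (\<lambda>n. \<bar>sol_coeff s q n * x^n\<bar>)"
proof (rule summableI_nonneg_bounded)
  fix N
  have "(\<Sum>n<N. \<bar>sol_coeff s q n * x^n\<bar>) \<le> (\<Sum>n\<le>N. \<bar>sol_coeff s q n * x^n\<bar>)"
    by (rule sum_mono2) auto
  also have "\<dots> \<le> (\<Sum>n\<le>N. \<bar>sol_coeff s q n\<bar> * (2/3)^n)"
    unfolding abs_mult power_abs using x by (intro sum_mono mult_left_mono power_mono) auto
  also have "\<dots> \<le> 2 * q"
    by (rule sol_coeff_majorant[OF s q])
  finally show "(\<Sum>n<N. \<bar>sol_coeff s q n * x^n\<bar>) \<le> 2 * q" .
qed simp

lemma summable_sol_coeff_powser:
  assumes "\<bar>s\<bar> \<le> 1" "0 \<le> q" "q \<le> 1/4" "\<bar>x\<bar> < 2/3"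
  shows "summable (\<lambda>n. sol_coeff s q n * x^n)"
  by (rule summable_rabs_cancel[OF summable_abs_sol_coeff_powser]) (use assms in auto)

lemma sol_coeff_powser_solves_ode:
  assumes "\<bar>s\<bar> \<le> 1" "0 \<le> q" "q \<le> 1/4"
  shows "ode_sol s q (powser_deriv (sol_coeff s q) 0)"
  unfolding ode_sol_def
proof (intro exI[of _ "powser_deriv (sol_coeff s q)"] conjI ballI)
  have summ: "summable (\<lambda>n. \<bar>sol_coeff s q n * x^n\<bar>)" if "\<bar>x\<bar> < 2/3" for x
    using summable_abs_sol_coeff_powser[OF assms] that by simp
  show "smooth_derivs_on {0..1/2} (powser_deriv (sol_coeff s q) 0) (powser_deriv (sol_coeff s q))"
    using summable_sol_coeff_powser[OF assms] by (intro smooth_derivs_on_powser[where r="2/3"]) auto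
  show "powser_deriv (sol_coeff s q) 0 0 = q" "powser_deriv (sol_coeff s q) 1 0 = 0"
    by (simp_all add: powser_deriv_def diffs_def)
  show "(a\<^sup>2 - 1) * powser_deriv (sol_coeff s q) 2 a + (8/3 * a - 2 / a) * powser_deriv (sol_coeff s q) 1 a
          + 4/9 * powser_deriv (sol_coeff s q) 0 a + s * powser_deriv (sol_coeff s q) 0 a ^ 7 = 0"
    if "a \<in> {0<..1/2}" for a
    using that summ by (intro powser_solves_ode[where r="2/3"] sol_coeff_rec) auto
qed

lemma Q0_coeff_sums:
  assumes a: "0 < \<bar>a\<bar>" "\<bar>a\<bar> < 1"
  shows "(\<lambda>n. Q0_coeff n * a^n) sums Q0 a"
proof -
  define g where "g n = (2/3::real) gchoose n" for n
  define f where "f n = g n * a^n - g n * (-a)^n" for n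
  have "f sums ((1 + a) powr (2/3) - (1 + -a) powr (2/3))"
    unfolding f_def g_def using a by (intro sums_diff gen_binomial_real) auto
  then have "(\<lambda>n. f (Suc n)) sums ((1 + a) powr (2/3) - (1 - a) powr (2/3))"
    by (subst sums_Suc_iff) (simp add: f_def)
  then have "(\<lambda>n. 3 / (4 * a) * f (Suc n)) sums (3 / (4 * a) * ((1 + a) powr (2/3) - (1 - a) powr (2/3)))"
    by (rule sums_mult)
  moreover have "3 / (4 * a) * f (Suc n) = Q0_coeff n * a^n" for n
  proof -
    have "f (Suc n) = g (Suc n) * a^(Suc n) * (1 + (-1)^n)"
      unfolding f_def by (subst power_minus) (simp add: algebra_simps)
    then show ?thesis
      using a by (simp add: Q0_coeff_def g_def field_simps)
  qed
  moreover have "3 / (4 * a) * ((1 + a) powr (2/3) - (1 - a) powr (2/3)) = Q0 a"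
    unfolding Q0_def phi1_def phi2_def using a by (simp add: field_simps)
  ultimately show ?thesis by simp
qed

lemma diffs_Q0_coeff_sums_deriv_Q0: "(\<lambda>n. diffs Q0_coeff n * (1/2)^n) sums deriv Q0 (1/2)"
proof -
  have conv: "summable (\<lambda>n. Q0_coeff n * x^n)" if "\<bar>x\<bar> < 1" for x
    using Q0_coeff_sums[of x] that by (cases "x = 0") (auto simp: sums_summable)
  have "((\<lambda>x. \<Sum>n. Q0_coeff n * x^n) has_real_derivative (\<Sum>n. diffs Q0_coeff n * (1/2)^n)) (at (1/2))"
    using conv by (intro termdiffs_strong'[where K=1]) auto
  then have "(Q0 has_real_derivative (\<Sum>n. diffs Q0_coeff n * (1/2)^n)) (at (1/2))"
  proof (rule has_field_derivative_transform_within_open[where S="{0<..<1}"])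
    show "(\<Sum>n. Q0_coeff n * x^n) = Q0 x" if "x \<in> {0<..<1}" for x
      using Q0_coeff_sums[of x] that by (simp add: sums_iff)
  qed auto
  then have "deriv Q0 (1/2) = (\<Sum>n. diffs Q0_coeff n * (1/2)^n)"
    by (rule DERIV_imp_deriv)
  then show ?thesis
    using termdiff_converges[of "1/2" 1 Q0_coeff] conv by (simp add: summable_sums)
qed

lemma abs_sums_le:
  fixes f :: "nat \<Rightarrow> real"
  assumes "f sums S" and "\<And>N. (\<Sum>n<N. \<bar>f n\<bar>) \<le> B"
  shows "\<bar>S\<bar> \<le> B"
proof -
  have "(\<lambda>N. \<bar>\<Sum>n<N. f n\<bar>) \<longlonglongrightarrow> \<bar>S\<bar>"
    using assms(1) by (intro tendsto_rabs) (simp add: sums_def)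
  moreover have "\<bar>\<Sum>n<N. f n\<bar> \<le> B" for N
    using sum_abs[of f "{..<N}"] assms(2)[of N] by linarith
  ultimately show ?thesis
    by (intro LIMSEQ_le_const2) auto
qed

lemma sol_value_estimate:
  assumes s: "\<bar>s\<bar> \<le> 1" and q: "0 \<le> q" "q \<le> 1/4"
  shows "\<bar>powser_deriv (sol_coeff s q) 0 (1/2) - q * Q0 (1/2)\<bar> \<le> 128 * q^7"
proof -
  have "(\<lambda>n. sol_coeff s q n * (1/2)^n - q * (Q0_coeff n * (1/2)^n))
          sums (powser_deriv (sol_coeff s q) 0 (1/2) - q * Q0 (1/2))"
    using summable_sol_coeff_powser[OF s q, of "1/2"] Q0_coeff_sums[of "1/2"]
    by (intro sums_diff sums_mult) (auto simp: powser_deriv_def intro: summable_sums)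
  then have rem: "(\<lambda>n. rem_coeff s q n * (1/2)^n) sums (powser_deriv (sol_coeff s q) 0 (1/2) - q * Q0 (1/2))"
    by (simp add: rem_coeff_def algebra_simps)
  show ?thesis
  proof (rule abs_sums_le[OF rem])
    fix N
    have "(\<Sum>n<N. \<bar>rem_coeff s q n * (1/2)^n\<bar>) \<le> (\<Sum>n\<le>N. \<bar>rem_coeff s q n * (1/2)^n\<bar>)"
      by (rule sum_mono2) auto
    also have "\<dots> \<le> (\<Sum>n\<le>N. (real n + 1) * \<bar>rem_coeff s q n\<bar> * (2/3)^n)"
    proof (rule sum_mono)
      fix n
      have "\<bar>rem_coeff s q n * (1/2)^n\<bar> \<le> 1 * \<bar>rem_coeff s q n\<bar> * (2/3)^n"
        by (simp add: abs_mult power_mono mult_left_mono)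
      also have "\<dots> \<le> (real n + 1) * \<bar>rem_coeff s q n\<bar> * (2/3)^n"
        by (intro mult_right_mono) auto
      finally show "\<bar>rem_coeff s q n * (1/2)^n\<bar> \<le> (real n + 1) * \<bar>rem_coeff s q n\<bar> * (2/3)^n" .
    qed
    also have "\<dots> \<le> 2/5 * (2 * q)^7"
      by (rule rem_coeff_majorant[OF s q])
    also have "\<dots> \<le> 128 * q^7"
      using q by simp
    finally show "(\<Sum>n<N. \<bar>rem_coeff s q n * (1/2)^n\<bar>) \<le> 128 * q^7" .
  qed
qed

lemma sol_deriv_estimate:
  assumes s: "\<bar>s\<bar> \<le> 1" and q: "0 \<le> q" "q \<le> 1/4"
  shows "\<bar>powser_deriv (sol_coeff s q) 1 (1/2) - q * deriv Q0 (1/2)\<bar> \<le> 128 * q^7"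
proof -
  have "summable (\<lambda>n. (diffs ^^ 1) (sol_coeff s q) n * (1/2)^n)"
    by (rule summable_diffs_iter[where r="2/3"]) (auto intro: summable_sol_coeff_powser[OF s q])
  then have "(\<lambda>n. diffs (sol_coeff s q) n * (1/2)^n - q * (diffs Q0_coeff n * (1/2)^n))
          sums (powser_deriv (sol_coeff s q) 1 (1/2) - q * deriv Q0 (1/2))"
    using diffs_Q0_coeff_sums_deriv_Q0
    by (intro sums_diff sums_mult) (auto simp: powser_deriv_def intro: summable_sums)
  then have rem: "(\<lambda>n. (real n + 1) * rem_coeff s q (Suc n) * (1/2)^n)
          sums (powser_deriv (sol_coeff s q) 1 (1/2) - q * deriv Q0 (1/2))"
    by (simp add: rem_coeff_def diffs_def algebra_simps)
  define b where "b n = (real n + 1) * \<bar>rem_coeff s q n\<bar> * (2/3::real)^n" for n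
  show ?thesis
  proof (rule abs_sums_le[OF rem])
    fix N
    have "(\<Sum>n<N. \<bar>(real n + 1) * rem_coeff s q (Suc n) * (1/2)^n\<bar>) \<le> (\<Sum>n<N. 3/2 * b (Suc n))"
    proof (rule sum_mono)
      fix n
      have "\<bar>(real n + 1) * rem_coeff s q (Suc n) * (1/2)^n\<bar> \<le> (real n + 2) * \<bar>rem_coeff s q (Suc n)\<bar> * (2/3)^n"
        by (simp add: abs_mult mult_mono power_mono)
      also have "\<dots> = 3/2 * b (Suc n)"
        by (simp add: b_def)
      finally show "\<bar>(real n + 1) * rem_coeff s q (Suc n) * (1/2)^n\<bar> \<le> 3/2 * b (Suc n)" .
    qed
    also have "\<dots> = 3/2 * (b 0 + (\<Sum>n<N. b (Suc n)))"
      by (simp add: sum_distrib_left b_def rem_coeff_def Q0_coeff_0)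
    also have "\<dots> = 3/2 * (\<Sum>n\<le>N. b n)"
      by (simp only: sum.atMost_shift)
    also have "\<dots> \<le> 3/2 * (2/5 * (2 * q)^7)"
      using rem_coeff_majorant[OF s q, of N] by (simp add: b_def)
    also have "\<dots> \<le> 128 * q^7"
      using q by simp
    finally show "(\<Sum>n<N. \<bar>(real n + 1) * rem_coeff s q (Suc n) * (1/2)^n\<bar>) \<le> 128 * q^7" .
  qed
qed

section \<open>Uniqueness\<close>

lemma norm_power_diff_le:
  fixes z w :: "'a::real_normed_field"
  assumes "norm z \<le> B" "norm w \<le> B"
  shows "norm (z^m - w^m) \<le> m * B^(m - 1) * norm (z - w)"
proof (cases "m = 0 \<or> B = 0")
  case True
  then show ?thesis using assms by (auto simp: power_0_left)
next
  case False
  moreover have "B \<ge> 0" using assms(1) norm_ge_zero[of z] by linarith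
  ultimately have B: "B > 0" and m: "m = Suc (m - 1)" by auto
  have "norm ((z / of_real B)^m - (w / of_real B)^m) \<le> m * norm (z / of_real B - w / of_real B)"
    using assms B by (intro norm_power_diff) (auto simp: norm_divide)
  then have "norm (z^m - w^m) / B^m \<le> m * (norm (z - w) / B)"
    using B by (simp add: power_divide norm_divide norm_power diff_divide_distrib [symmetric])
  then have "norm (z^m - w^m) \<le> m * (norm (z - w) / B) * B^m"
    using B by (simp add: divide_le_eq)
  also have "\<dots> = m * B^(m - 1) * norm (z - w)"
    using B by (subst m) (simp add: field_simps)
  finally show ?thesis .
qed

lemma real_interval_step_induct:
  fixes P :: "real \<Rightarrow> bool"
  assumes h: "h > 0" and P0: "P 0"
    and step: "\<And>t. t \<in> {0..T} \<Longrightarrow> P t \<Longrightarrow> \<forall>x\<in>{t..min (t + h) T}. P x"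
  shows "\<forall>x\<in>{0..T}. P x"
proof -
  have upto: "\<forall>x\<in>{0..min (real k * h) T}. P x" for k :: nat
  proof (induction k)
    case 0
    then show ?case using P0 by auto
  next
    case (Suc k)
    show ?case
    proof (cases "real k * h \<le> T")
      case False
      then have "min (real (Suc k) * h) T = min (real k * h) T"
        using h by (simp add: distrib_right)
      then show ?thesis using Suc by simp
    next
      case True
      then have t: "real k * h \<in> {0..T}" using h by simp
      then have "P (real k * h)" using Suc by simp
      then have "\<forall>x\<in>{real k * h..min (real k * h + h) T}. P x"
        by (rule step[OF t])
      then show ?thesis
        using Suc by (auto simp: distrib_right not_le dest: spec[of _ 0] intro: ccontr)
    qed
  qed
  obtain k :: nat where "T / h < real k"
    using reals_Archimedean2 by blast
  then have "T \<le> real k * h" using h by (simp add: field_simps)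
  then show ?thesis using upto[of k] by simp
qed

lemma weight_ratio_le:
  fixes x z :: real
  assumes "0 \<le> z" "z \<le> x" "x \<le> 1/2"
  shows "z\<^sup>2 / (1 - z\<^sup>2)\<^sup>2 \<le> 4/3 * (x\<^sup>2 / (1 - x\<^sup>2))"
proof -
  have zx: "z\<^sup>2 \<le> x\<^sup>2"
    using assms by (intro power_mono) auto
  have "x * x \<le> 1/2 * (1/2)"
    using assms by (intro mult_mono) auto
  then have x2: "x\<^sup>2 \<le> 1/4"
    by (simp add: power2_eq_square)
  have "z\<^sup>2 / (1 - z\<^sup>2)\<^sup>2 = (z\<^sup>2 / (1 - z\<^sup>2)) * (1 / (1 - z\<^sup>2))"
    by (simp add: power2_eq_square)
  also have "\<dots> \<le> (x\<^sup>2 / (1 - x\<^sup>2)) * (4/3)"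
  proof (rule mult_mono)
    show "z\<^sup>2 / (1 - z\<^sup>2) \<le> x\<^sup>2 / (1 - x\<^sup>2)"
      using zx x2 by (intro frac_le) auto
    show "1 / (1 - z\<^sup>2) \<le> 4/3"
      using zx x2 by (simp add: divide_le_eq)
  qed (use zx x2 in auto)
  finally show ?thesis by (metis mult.commute)
qed

text \<open>Difference \<open>W\<close> of two solutions with the same initial data, with \<open>F\<close> collecting the
  terms of order zero.\<close>

locale singular_ode_difference =
  fixes W W1 W2 F :: "real \<Rightarrow> real" and L :: real
  assumes W_deriv: "\<And>x. x \<in> {0..1/2} \<Longrightarrow> (W has_real_derivative W1 x) (at x within {0..1/2})"
    and W1_deriv: "\<And>x. x \<in> {0..1/2} \<Longrightarrow> (W1 has_real_derivative W2 x) (at x within {0..1/2})"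
    and W_0: "W 0 = 0" and W1_0: "W1 0 = 0"
    and ode: "\<And>x. x \<in> {0<..1/2} \<Longrightarrow> (x\<^sup>2 - 1) * W2 x + (8/3 * x - 2 / x) * W1 x + F x = 0"
    and F_le: "\<And>x. x \<in> {0<..1/2} \<Longrightarrow> \<bar>F x\<bar> \<le> L * \<bar>W x\<bar>"
    and L_nonneg: "L \<ge> 0"
begin

text \<open>Multiplying \<open>W1\<close> by \<open>x\<^sup>2 / (1 - x\<^sup>2)\<close> cancels the singular term \<open>-2/x W1\<close> of the ODE.\<close>

lemma weighted_W1_deriv:
  assumes x: "x \<in> {0..1/2}"
  shows "((\<lambda>y. y\<^sup>2 / (1 - y\<^sup>2) * W1 y) has_real_derivative x\<^sup>2 / (1 - x\<^sup>2)\<^sup>2 * (8/3 * x * W1 x + F x))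
           (at x within {0..1/2})"
proof -
  have "x * x \<le> 1/2 * (1/2)"
    using x by (intro mult_mono) auto
  then have x2: "1 - x\<^sup>2 > 0"
    by (simp add: power2_eq_square)
  have "((\<lambda>y. y\<^sup>2 / (1 - y\<^sup>2)) has_real_derivative 2 * x / (1 - x\<^sup>2)\<^sup>2) (at x within {0..1/2})"
    by (rule derivative_eq_intros refl | use x2 in \<open>simp add: field_simps power2_eq_square\<close>)+
  from DERIV_mult'[OF this W1_deriv[OF x]]
  have "((\<lambda>y. y\<^sup>2 / (1 - y\<^sup>2) * W1 y) has_real_derivative
          2 * x / (1 - x\<^sup>2)\<^sup>2 * W1 x + x\<^sup>2 / (1 - x\<^sup>2) * W2 x) (at x within {0..1/2})"
    by (simp add: add.commute)
  moreover have "2 * x / (1 - x\<^sup>2)\<^sup>2 * W1 x + x\<^sup>2 / (1 - x\<^sup>2) * W2 x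
                   = x\<^sup>2 / (1 - x\<^sup>2)\<^sup>2 * (8/3 * x * W1 x + F x)"
  proof (cases "x = 0")
    case False
    then have "(x\<^sup>2 - 1) * W2 x + (8/3 * x - 2 / x) * W1 x + F x = 0"
      using x by (intro ode) auto
    then have W2: "W2 x = ((8/3 * x - 2 / x) * W1 x + F x) / (1 - x\<^sup>2)"
      using x2 by (simp add: field_simps)
    have "2 * x / u\<^sup>2 * w + x\<^sup>2 / u * (((8/3 * x - 2 / x) * w + f) / u) = x\<^sup>2 / u\<^sup>2 * (8/3 * x * w + f)"
      if "u \<noteq> 0" for u w f
      using that False by (simp add: field_simps power2_eq_square)
    then show ?thesis
      unfolding W2 using x2 by simp
  qed (simp add: W1_0)
  ultimately show ?thesis by simp
qed

lemma W1_le: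
  assumes t0: "0 \<le> t0" "W1 t0 = 0" and x: "t0 \<le> x" "x \<le> 1/2"
    and M: "\<And>z. z \<in> {t0..x} \<Longrightarrow> \<bar>W z\<bar> \<le> M \<and> \<bar>W1 z\<bar> \<le> M"
  shows "\<bar>W1 x\<bar> \<le> 4/3 * (4/3 + L) * M * (x - t0)"
proof (cases "x = t0")
  case True
  then show ?thesis using t0 by simp
next
  case False
  define mu where "mu y = y\<^sup>2 / (1 - y\<^sup>2)" for y :: real
  have "x * x \<le> 1/2 * (1/2)"
    using t0 x by (intro mult_mono) auto
  then have mux: "mu x > 0"
    using False t0 x by (simp add: mu_def power2_eq_square)
  have M0: "M \<ge> 0"
    using M[of x] x by auto
  have sub: "{t0..x} \<subseteq> {0..1/2}"
    using t0 x by auto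
  have bound: "\<bar>z\<^sup>2 / (1 - z\<^sup>2)\<^sup>2 * (8/3 * z * W1 z + F z)\<bar> \<le> mu x * (4/3 * (4/3 + L) * M)"
    if z: "z \<in> {t0..x}" for z
  proof (cases "z = 0")
    case True
    then show ?thesis using mux M0 L_nonneg by simp
  next
    case False
    then have z0: "z \<in> {0<..1/2}" using z sub by auto
    have "\<bar>8/3 * z * W1 z + F z\<bar> \<le> 8/3 * z * \<bar>W1 z\<bar> + \<bar>F z\<bar>"
      using z0 by (auto simp: abs_mult intro: abs_triangle_ineq [THEN order_trans])
    also have "\<dots> \<le> 8/3 * (1/2) * M + L * M"
      using M[OF z] z0 F_le[OF z0] mult_left_mono[of "\<bar>W z\<bar>" M L] L_nonneg
      by (intro add_mono mult_mono) auto
    finally have "\<bar>8/3 * z * W1 z + F z\<bar> \<le> (4/3 + L) * M"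
      by (simp add: algebra_simps)
    moreover have "z\<^sup>2 / (1 - z\<^sup>2)\<^sup>2 \<le> 4/3 * mu x"
      unfolding mu_def using z0 z x by (intro weight_ratio_le) auto
    ultimately have "z\<^sup>2 / (1 - z\<^sup>2)\<^sup>2 * \<bar>8/3 * z * W1 z + F z\<bar> \<le> 4/3 * mu x * ((4/3 + L) * M)"
      using mux by (intro mult_mono) auto
    then show ?thesis
      by (simp add: abs_mult mult_ac)
  qed
  have "\<bar>mu x * W1 x - mu t0 * W1 t0\<bar> \<le> mu x * (4/3 * (4/3 + L) * M) * \<bar>x - t0\<bar>"
  proof (rule field_differentiable_bound[where S="{t0..x}", simplified real_norm_def])
    fix z assume z: "z \<in> {t0..x}"
    show "((\<lambda>y. mu y * W1 y) has_real_derivative z\<^sup>2 / (1 - z\<^sup>2)\<^sup>2 * (8/3 * z * W1 z + F z)) (at z within {t0..x})"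
      unfolding mu_def using weighted_W1_deriv z sub by (blast intro: DERIV_subset)
  qed (use bound x in auto)
  then have "mu x * \<bar>W1 x\<bar> \<le> mu x * (4/3 * (4/3 + L) * M * (x - t0))"
    using t0 x mux by (simp add: abs_mult mult_ac)
  then show ?thesis
    using mux by simp
qed

text \<open>On an interval of length \<open>h\<close> the sup \<open>M\<close> of \<open>\<bar>W\<bar> + \<bar>W1\<bar>\<close> satisfies \<open>M \<le> M/2\<close>.\<close>

lemma vanishing_step:
  obtains h where "h > 0"
    and "\<And>t0. t0 \<in> {0..1/2} \<Longrightarrow> W t0 = 0 \<and> W1 t0 = 0 \<Longrightarrow>
           \<forall>x\<in>{t0..min (t0 + h) (1/2)}. W x = 0 \<and> W1 x = 0"
proof
  define K where "K = 4/3 * (4/3 + L)"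
  define h where "h = 1 / (2 * (1 + K))"
  have K0: "K \<ge> 0" using L_nonneg by (simp add: K_def)
  then show h0: "h > 0" by (simp add: h_def)
  fix t0 assume t0: "t0 \<in> {0..1/2}" and zero: "W t0 = 0 \<and> W1 t0 = 0"
  define J where "J = {t0..min (t0 + h) (1/2)}"
  have J: "J \<subseteq> {0..1/2}" "J \<noteq> {}"
    using t0 h0 by (auto simp: J_def min_def)
  have "continuous_on {0..1/2} W" "continuous_on {0..1/2} W1"
    using DERIV_continuous_on[OF W_deriv] DERIV_continuous_on[OF W1_deriv] by auto
  then have "continuous_on J (\<lambda>y. \<bar>W y\<bar> + \<bar>W1 y\<bar>)"
    using J(1) by (auto intro!: continuous_intros intro: continuous_on_subset)
  then have "\<exists>ymax\<in>J. \<forall>y\<in>J. \<bar>W y\<bar> + \<bar>W1 y\<bar> \<le> \<bar>W ymax\<bar> + \<bar>W1 ymax\<bar>"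
    using continuous_attains_sup[OF _ J(2)] by (simp add: J_def)
  then obtain ymax where ymax: "ymax \<in> J" "\<forall>y\<in>J. \<bar>W y\<bar> + \<bar>W1 y\<bar> \<le> \<bar>W ymax\<bar> + \<bar>W1 ymax\<bar>"
    by blast
  define M where "M = \<bar>W ymax\<bar> + \<bar>W1 ymax\<bar>"
  have M: "\<bar>W y\<bar> \<le> M \<and> \<bar>W1 y\<bar> \<le> M" if "y \<in> J" for y
    using ymax(2) that unfolding M_def by fastforce
  have half: "\<bar>W y\<bar> + \<bar>W1 y\<bar> \<le> M / 2" if y: "y \<in> J" for y
  proof -
    have y0: "t0 \<le> y" "y \<le> 1/2" "y - t0 \<le> h"
      using y by (auto simp: J_def)
    have sub: "{t0..y} \<subseteq> J"
      using y by (auto simp: J_def)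
    have "\<bar>W y - W t0\<bar> \<le> M * \<bar>y - t0\<bar>"
    proof (rule field_differentiable_bound[where S="{t0..y}" and f'=W1, simplified real_norm_def])
      fix z assume "z \<in> {t0..y}"
      then have "z \<in> J" using sub by blast
      then show "(W has_real_derivative W1 z) (at z within {t0..y})" "\<bar>W1 z\<bar> \<le> M"
        using J(1) sub M by (auto intro: DERIV_subset[OF W_deriv])
    qed (use y0 in auto)
    then have "\<bar>W y\<bar> \<le> M * (y - t0)"
      using zero y0 by simp
    moreover have "\<bar>W1 y\<bar> \<le> K * M * (y - t0)"
      unfolding K_def using t0 zero y0 M sub by (intro W1_le) auto
    ultimately have "\<bar>W y\<bar> + \<bar>W1 y\<bar> \<le> (1 + K) * M * (y - t0)"
      by (simp add: algebra_simps)
    also have "\<dots> \<le> (1 + K) * M * h"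
      using K0 M[OF y] y0 by (intro mult_left_mono) auto
    also have "\<dots> = M / 2"
      using K0 by (simp add: h_def field_simps)
    finally show ?thesis .
  qed
  have "M \<le> 0"
    using half[OF ymax(1)] by (simp add: M_def)
  then show "\<forall>x\<in>{t0..min (t0 + h) (1/2)}. W x = 0 \<and> W1 x = 0"
    using half by (fastforce simp: J_def)
qed

lemma W_eq_0:
  assumes "x \<in> {0..1/2}"
  shows "W x = 0"
proof -
  obtain h where "h > 0" and step: "\<And>t0. t0 \<in> {0..1/2} \<Longrightarrow> W t0 = 0 \<and> W1 t0 = 0 \<Longrightarrow>
           \<forall>x\<in>{t0..min (t0 + h) (1/2)}. W x = 0 \<and> W1 x = 0"
    using vanishing_step by blast
  have "\<forall>x\<in>{0..1/2}. W x = 0 \<and> W1 x = 0"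
    by (rule real_interval_step_induct[where P="\<lambda>x. W x = 0 \<and> W1 x = 0", OF \<open>h > 0\<close> _ step])
      (simp_all add: W_0 W1_0)
  then show ?thesis
    using assms by blast
qed

end

lemma smooth_derivs_on_first_derivs:
  assumes "smooth_derivs_on S f D" "x \<in> S"
  shows "(f has_real_derivative D 1 x) (at x within S)"
    and "(D 1 has_real_derivative D 2 x) (at x within S)"
  using assms unfolding smooth_derivs_on_def by (metis One_nat_def Suc_1)+

lemma bounded_on_Icc:
  fixes f :: "real \<Rightarrow> real"
  assumes "continuous_on {a..b} f"
  obtains B where "\<And>x. x \<in> {a..b} \<Longrightarrow> \<bar>f x\<bar> \<le> B"
proof -
  have "bounded (f ` {a..b})"
    using assms by (intro compact_imp_bounded compact_continuous_image) auto
  then obtain B where "\<forall>y\<in>f ` {a..b}. \<bar>y\<bar> \<le> B"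
    unfolding bounded_iff by auto
  then show ?thesis
    by (intro that) auto
qed

lemma ode_sol_unique:
  assumes R: "ode_sol \<sigma> q R" and Q: "ode_sol \<sigma> q Q"
  shows "\<forall>a\<in>{0..1/2}. R a = Q a"
proof -
  obtain DR where DR: "smooth_derivs_on {0..1/2} R DR" "R 0 = q" "DR 1 0 = 0"
    "\<And>a. a \<in> {0<..1/2} \<Longrightarrow> (a\<^sup>2 - 1) * DR 2 a + (8/3 * a - 2 / a) * DR 1 a + 4/9 * R a + \<sigma> * R a ^ 7 = 0"
    using R unfolding ode_sol_def by blast
  obtain DQ where DQ: "smooth_derivs_on {0..1/2} Q DQ" "Q 0 = q" "DQ 1 0 = 0"
    "\<And>a. a \<in> {0<..1/2} \<Longrightarrow> (a\<^sup>2 - 1) * DQ 2 a + (8/3 * a - 2 / a) * DQ 1 a + 4/9 * Q a + \<sigma> * Q a ^ 7 = 0"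
    using Q unfolding ode_sol_def by blast
  note dR = smooth_derivs_on_first_derivs[OF DR(1)] and dQ = smooth_derivs_on_first_derivs[OF DQ(1)]
  obtain BR where BR: "\<And>x. x \<in> {0..1/2} \<Longrightarrow> \<bar>R x\<bar> \<le> BR"
    using bounded_on_Icc DERIV_continuous_on[OF dR(1)] by metis
  obtain BQ where BQ: "\<And>x. x \<in> {0..1/2} \<Longrightarrow> \<bar>Q x\<bar> \<le> BQ"
    using bounded_on_Icc DERIV_continuous_on[OF dQ(1)] by metis
  define B where "B = max BR BQ"
  have lip: "\<bar>R x ^ 7 - Q x ^ 7\<bar> \<le> 7 * B^6 * \<bar>R x - Q x\<bar>" if "x \<in> {0..1/2}" for x
    using norm_power_diff_le[of "R x" B "Q x" 7] BR[OF that] BQ[OF that] by (simp add: B_def)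
  interpret singular_ode_difference "\<lambda>x. R x - Q x" "\<lambda>x. DR 1 x - DQ 1 x" "\<lambda>x. DR 2 x - DQ 2 x"
    "\<lambda>x. 4/9 * (R x - Q x) + \<sigma> * (R x ^ 7 - Q x ^ 7)" "4/9 + \<bar>\<sigma>\<bar> * (7 * B^6)"
  proof unfold_locales
    fix x :: real
    assume x: "x \<in> {0..1/2}"
    show "((\<lambda>x. R x - Q x) has_real_derivative DR 1 x - DQ 1 x) (at x within {0..1/2})"
      "((\<lambda>x. DR 1 x - DQ 1 x) has_real_derivative DR 2 x - DQ 2 x) (at x within {0..1/2})"
      using DERIV_diff[OF dR(1)[OF x] dQ(1)[OF x]] DERIV_diff[OF dR(2)[OF x] dQ(2)[OF x]] by simp_all
  next
    fix x :: real
    assume x: "x \<in> {0<..1/2}"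
    show "(x\<^sup>2 - 1) * (DR 2 x - DQ 2 x) + (8/3 * x - 2 / x) * (DR 1 x - DQ 1 x)
            + (4/9 * (R x - Q x) + \<sigma> * (R x ^ 7 - Q x ^ 7)) = 0"
      using DR(4)[OF x] DQ(4)[OF x] unfolding right_diff_distrib by linarith
    have "\<bar>\<sigma> * (R x ^ 7 - Q x ^ 7)\<bar> \<le> \<bar>\<sigma>\<bar> * (7 * B^6 * \<bar>R x - Q x\<bar>)"
      unfolding abs_mult using lip x by (intro mult_left_mono) auto
    moreover have "\<bar>4/9 * (R x - Q x) + \<sigma> * (R x ^ 7 - Q x ^ 7)\<bar>
        \<le> 4/9 * \<bar>R x - Q x\<bar> + \<bar>\<sigma> * (R x ^ 7 - Q x ^ 7)\<bar>"
      using abs_triangle_ineq[of "4/9 * (R x - Q x)" "\<sigma> * (R x ^ 7 - Q x ^ 7)"]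
      unfolding abs_mult by simp
    ultimately show "\<bar>4/9 * (R x - Q x) + \<sigma> * (R x ^ 7 - Q x ^ 7)\<bar> \<le> (4/9 + \<bar>\<sigma>\<bar> * (7 * B^6)) * \<bar>R x - Q x\<bar>"
      by (simp add: algebra_simps)
  qed (use DR DQ in auto)
  show ?thesis
    using W_eq_0 by simp
qed

lemma real_derivative_unique_within_Icc:
  assumes "a < b" "x \<in> {a..b}"
    and "(f has_real_derivative d) (at x within {a..b})" "(f has_real_derivative d') (at x within {a..b})"
  shows "d = d'"
  using vector_derivative_unique_within_closed_interval[of a b x f d d'] assms
  by (simp add: has_real_derivative_iff_has_vector_derivative)

lemma sol_deriv_at_half:
  assumes "\<bar>s\<bar> \<le> 1" "0 \<le> q" "q \<le> 1/4"
    and "(powser_deriv (sol_coeff s q) 0 has_real_derivative d) (at (1/2) within {0..1/2})"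
  shows "d = powser_deriv (sol_coeff s q) 1 (1/2)"
proof -
  have "(powser_deriv (sol_coeff s q) 0 has_real_derivative powser_deriv (sol_coeff s q) (Suc 0) (1/2)) (at (1/2))"
    by (rule powser_deriv_has_derivative[where r="2/3"]) (auto intro: summable_sol_coeff_powser[OF assms(1-3)])
  then show ?thesis
    using assms(4) by (intro real_derivative_unique_within_Icc[of 0 "1/2" "1/2"])
      (auto intro: has_field_derivative_at_within)
qed

lemma sol_smooth_even:
  assumes "\<bar>s\<bar> \<le> 1" "0 \<le> q" "q \<le> 1/4"
  shows "smooth_on {-1/2..1/2} (powser_deriv (sol_coeff s q) 0)"
    and "powser_deriv (sol_coeff s q) 0 (-a) = powser_deriv (sol_coeff s q) 0 a"
proof -
  show "smooth_on {-1/2..1/2} (powser_deriv (sol_coeff s q) 0)"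
    unfolding smooth_on_def using summable_sol_coeff_powser[OF assms]
    by (intro exI[of _ "powser_deriv (sol_coeff s q)"] smooth_derivs_on_powser[where r="2/3"]) auto
  show "powser_deriv (sol_coeff s q) 0 (-a) = powser_deriv (sol_coeff s q) 0 a"
    by (intro powser_deriv_0_even sol_coeff_odd)
qed

lemma ode_sol_exists_unique_with_estimates:
  assumes s: "\<bar>s\<bar> \<le> 1" and q: "q \<in> {0..1/4}"
  shows "\<exists>Q. ode_sol s q Q
           \<and> (\<forall>R. ode_sol s q R \<longrightarrow> (\<forall>a\<in>{0..1/2}. R a = Q a))
           \<and> \<bar>Q (1/2) - q * Q0 (1/2)\<bar> \<le> 128 * q ^ 7
           \<and> (\<forall>d. (Q has_real_derivative d) (at (1/2) within {0..1/2}) \<longrightarrow>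
                  \<bar>d - q * deriv Q0 (1/2)\<bar> \<le> 128 * q ^ 7)
           \<and> (\<exists>E. smooth_on {-1/2..1/2} E
                  \<and> (\<forall>a\<in>{-1/2..1/2}. E (-a) = E a)
                  \<and> (\<forall>a\<in>{0..1/2}. E a = Q a))"
proof (intro exI[of _ "powser_deriv (sol_coeff s q) 0"] conjI allI impI ballI)
  from q have q: "0 \<le> q" "q \<le> 1/4" by auto
  let ?Q = "powser_deriv (sol_coeff s q) 0"
  show sol: "ode_sol s q ?Q"
    by (rule sol_coeff_powser_solves_ode[OF s q])
  show "R a = ?Q a" if "ode_sol s q R" "a \<in> {0..1/2}" for R a
    using ode_sol_unique[OF that(1) sol] that(2) by blast
  show "\<bar>?Q (1/2) - q * Q0 (1/2)\<bar> \<le> 128 * q ^ 7"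
    by (rule sol_value_estimate[OF s q])
  show "\<bar>d - q * deriv Q0 (1/2)\<bar> \<le> 128 * q ^ 7"
    if "(?Q has_real_derivative d) (at (1/2) within {0..1/2})" for d
    using sol_deriv_at_half[OF s q that] sol_deriv_estimate[OF s q] by simp
  show "smooth_on {-1/2..1/2} ?Q"
    by (rule sol_smooth_even(1)[OF s q])
  show "?Q (-a) = ?Q a" for a
    by (rule sol_smooth_even(2)[OF s q])
qed simp

theorem lemma2p1:
  fixes \<sigma> :: real
  assumes "\<sigma> = 1 \<or> \<sigma> = -1"
  shows "\<exists>\<epsilon>>0. \<exists>C. \<forall>q0\<in>{0..\<epsilon>}.
           \<exists>Q. ode_sol \<sigma> q0 Q
             \<and> (\<forall>R. ode_sol \<sigma> q0 R \<longrightarrow> (\<forall>a\<in>{0..1/2}. R a = Q a))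
             \<and> \<bar>Q (1/2) - q0 * Q0 (1/2)\<bar> \<le> C * q0 ^ 7
             \<and> (\<forall>d. (Q has_real_derivative d) (at (1/2) within {0..1/2}) \<longrightarrow>
                    \<bar>d - q0 * deriv Q0 (1/2)\<bar> \<le> C * q0 ^ 7)
             \<and> (\<exists>E. smooth_on {-1/2..1/2} E
                    \<and> (\<forall>a\<in>{-1/2..1/2}. E (-a) = E a)
                    \<and> (\<forall>a\<in>{0..1/2}. E a = Q a))"
proof -
  have "\<bar>\<sigma>\<bar> \<le> 1"
    using assms by auto
  then show ?thesis
    using ode_sol_exists_unique_with_estimates
    by (intro exI[of _ "1/4"] conjI exI[of _ 128]) auto
qed

end
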